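(* For all $\delta,B>0$ there are $C,d_0\ge 1$ such that the following holds. Let $M$ be a positive integer and let $A_1,\ldots,A_K\subset[-M,M]\cap\mathbb Z$ with $K\ge CM$ and $|A_i|\ge\delta M\ge 2$ for all $i\in[K]$. Then there are $a\in\mathbb Z$ and $d\in\mathbb N$ with $1\le d\le d_0$ such that $$\{a+id:\ 0\le i\le BM^2\}\subset A_1+A_2+\cdots+A_K,$$ where $A_1+\cdots+A_K=\{a_1+\cdots+a_K: a_i\in A_i\ \forall i\}$. *)

theory Defs
  imports Complex_Main
begin

definition sumset :: "(nat \<Rightarrow> int set) \<Rightarrow> nat \<Rightarrow> int set" where
  "sumset A K = {(\<Sum>i=1..K. f i) | f. \<forall>i\<in>{1..K}. f i \<in> A i}"

end

theory Submission
  imports Defs "HOL-Library.FuncSet"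
begin

text \<open>Each \<open>A\<^sub>i\<close>, having at least \<open>\<delta>M \<ge> 2\<close> elements in an interval of length \<open>2M\<close>, contains
  two elements at distance \<open>g\<^sub>i \<le> 4/\<delta>\<close>, namely its smallest gap. By pigeonhole, one difference
  \<open>g \<le> d\<^sub>0 = \<lceil>4/\<delta>\<rceil>\<close> is shared by a set \<open>S\<close> of at least \<open>K/d\<^sub>0\<close> indices, and for \<open>i \<in> S\<close> the
  most popular residue class of \<open>A\<^sub>i\<close> modulo \<open>g\<close> has extreme elements at distance \<open>T\<^sub>i g\<close> with
  \<open>\<delta>M/d\<^sub>0 - 1 \<le> T\<^sub>i \<le> 2M\<close>. Adding the sets one at a time, we keep an arithmetic progression
  of difference \<open>g\<close> inside the partial sumset: every index of \<open>S\<close> lengthens it by at least one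
  term, and by \<open>T\<^sub>i\<close> terms once it has at least \<open>T\<^sub>i\<close> terms, which is the case after \<open>2M\<close> indices
  of \<open>S\<close>. Its final length is thus at least \<open>(\<delta>M/d\<^sub>0 - 1)(|S| - 2M) \<ge> BM\<^sup>2\<close>.\<close>

definition arith_prog :: "int \<Rightarrow> nat \<Rightarrow> nat \<Rightarrow> int set" where
  "arith_prog a d L = {a + int j * int d | j. j \<le> L}"

lemma sumset_0: "sumset A 0 = {0}"
  unfolding sumset_def by auto

lemma add_mem_sumset_Suc:
  assumes "x \<in> sumset A k" "y \<in> A (Suc k)"
  shows "x + y \<in> sumset A (Suc k)"
proof -
  obtain f where f: "x = (\<Sum>i=1..k. f i)" "\<forall>i\<in>{1..k}. f i \<in> A i"
    using assms(1) unfolding sumset_def by auto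
  define f' where "f' = f(Suc k := y)"
  have "(\<Sum>i=1..k. f' i) = (\<Sum>i=1..k. f i)"
    by (rule sum.cong) (auto simp: f'_def)
  then have "x + y = (\<Sum>i=1..Suc k. f' i)"
    using f by (simp add: f'_def)
  moreover have "\<forall>i\<in>{1..Suc k}. f' i \<in> A i"
    using f(2) assms(2) by (auto simp: f'_def le_Suc_eq)
  ultimately show ?thesis
    unfolding sumset_def by blast
qed

text \<open>The translates of the progression by \<open>u\<close> and by \<open>u + t d\<close> overlap or abut since \<open>t \<le> L + 1\<close>.\<close>
lemma arith_prog_sumset_Suc:
  assumes "arith_prog a d L \<subseteq> sumset A k"
    and "u \<in> A (Suc k)" "u + int t * int d \<in> A (Suc k)" "t \<le> L + 1"
  shows "arith_prog (a + u) d (L + t) \<subseteq> sumset A (Suc k)"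
proof
  fix z assume "z \<in> arith_prog (a + u) d (L + t)"
  then obtain j where j: "z = (a + u) + int j * int d" "j \<le> L + t"
    by (auto simp: arith_prog_def)
  show "z \<in> sumset A (Suc k)"
  proof (cases "j \<le> L")
    case True
    then have "a + int j * int d \<in> sumset A k"
      using assms(1) by (auto simp: arith_prog_def)
    from add_mem_sumset_Suc[OF this assms(2)] show ?thesis
      using j by (simp add: algebra_simps)
  next
    case False
    then have "j - t \<le> L"
      using assms(4) j(2) by simp
    then have "a + int (j - t) * int d \<in> sumset A k"
      using assms(1) unfolding arith_prog_def by blast
    from add_mem_sumset_Suc[OF this assms(3)] show ?thesis
      using j(1) False assms(4) by (simp add: algebra_simps)
  qed
qed

lemma arith_prog_sumset_Suc_extend:
  assumes "arith_prog a d L \<subseteq> sumset A k"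
    and "u \<in> A (Suc k)" "u + int d \<in> A (Suc k)" "v \<in> A (Suc k)" "v + int T * int d \<in> A (Suc k)"
  shows "\<exists>a' L'. arith_prog a' d L' \<subseteq> sumset A (Suc k) \<and> L + 1 \<le> L' \<and>
    (T \<le> L + 1 \<longrightarrow> L + T \<le> L')"
proof (cases "1 \<le> T \<and> T \<le> L + 1")
  case True
  with arith_prog_sumset_Suc[OF assms(1,4,5)] show ?thesis
    by (intro exI[of _ "a + v"] exI[of _ "L + T"]) simp
next
  case False
  with arith_prog_sumset_Suc[OF assms(1,2), of 1] assms(3) show ?thesis
    by (intro exI[of _ "a + u"] exI[of _ "L + 1"]) auto
qed

lemma Min_add_spacing_le_Max:
  fixes F :: "int set"
  assumes "finite F" "F \<noteq> {}" "\<forall>x\<in>F. \<forall>y\<in>F. x < y \<longrightarrow> c \<le> y - x"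
  shows "Min F + c * (int (card F) - 1) \<le> Max F"
  using assms
proof (induction F rule: finite_linorder_max_induct)
  case empty
  then show ?case by simp
next
  case (insert b F)
  show ?case
  proof (cases "F = {}")
    case True
    then show ?thesis by simp
  next
    case False
    have IH: "Min F + c * (int (card F) - 1) \<le> Max F"
      using insert False by simp
    have "Min F < b" "Max F < b"
      using insert.hyps False by auto
    then have "c \<le> b - Max F"
      using insert.prems(2) False insert.hyps(1) by simp
    moreover have "Min (insert b F) = Min F" "Max (insert b F) = b" "card (insert b F) = card F + 1"
      using insert.hyps False \<open>Min F < b\<close> \<open>Max F < b\<close> by auto
    ultimately show ?thesis
      using IH by (simp add: algebra_simps)
  qed
qed

text \<open>Take \<open>g\<close> to be the smallest positive difference of two elements of \<open>A\<close>.\<close>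
lemma exists_small_difference:
  fixes A :: "int set"
  assumes "finite A" "2 \<le> card A"
  shows "\<exists>x g. x \<in> A \<and> x + int g \<in> A \<and> 1 \<le> g \<and> int g * (int (card A) - 1) \<le> Max A - Min A"
proof -
  define D where "D = {y - x | x y. x \<in> A \<and> y \<in> A \<and> x < y}"
  have "finite D"
  proof (rule finite_subset)
    show "D \<subseteq> (\<lambda>(x, y). y - x) ` (A \<times> A)"
      by (auto simp: D_def)
  qed (use assms(1) in simp)
  obtain x0 y0 where "x0 \<in> A" "y0 \<in> A" "x0 < y0"
    using assms by (metis card_le_Suc0_iff_eq linorder_neqE not_less_eq_eq numeral_2_eq_2)
  then have "D \<noteq> {}"
    by (auto simp: D_def)
  then obtain x y where xy: "Min D = y - x" "x \<in> A" "y \<in> A" "x < y"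
    using Min_in[OF \<open>finite D\<close>] by (force simp: D_def)
  have "\<forall>x\<in>A. \<forall>y\<in>A. x < y \<longrightarrow> Min D \<le> y - x"
    using \<open>finite D\<close> by (auto simp: D_def intro: Min_le)
  from Min_add_spacing_le_Max[OF assms(1) _ this] xy(2)
  have "Min A + Min D * (int (card A) - 1) \<le> Max A"
    by blast
  with xy show ?thesis
    by (intro exI[of _ x] exI[of _ "nat (Min D)"]) auto
qed

text \<open>The extreme elements of a most popular residue class modulo \<open>g\<close> are far apart.\<close>
lemma exists_long_difference_mod:
  fixes A :: "int set" and g :: nat
  assumes "finite A" "A \<noteq> {}" "1 \<le> g"
  shows "\<exists>v T. v \<in> A \<and> v + int T * int g \<in> A \<and> card A \<le> g * (T + 1) \<and>
    int T * int g \<le> Max A - Min A"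
proof -
  obtain r where "card A \<le> card ((\<lambda>x. x mod int g) -` {r} \<inter> A) * card {0..<int g}"
    using pigeonhole_card[of "\<lambda>x. x mod int g" A "{0..<int g}"] assms by auto
  moreover define F where "F = (\<lambda>x. x mod int g) -` {r} \<inter> A"
  ultimately have card_A: "card A \<le> g * card F"
    by (simp add: mult.commute)
  have "F \<subseteq> A" "finite F"
    using assms(1) by (auto simp: F_def)
  have "F \<noteq> {}"
    using card_A assms(1,2) by auto
  then have "Min F \<in> F" "Max F \<in> F"
    using \<open>finite F\<close> by simp_all
  with \<open>F \<subseteq> A\<close> have ext: "Min F \<in> A" "Max F \<in> A" "Max F - Min F \<le> Max A - Min A"
    using assms(1) by (auto intro: Min_le Max_ge diff_mono)
  have dvd: "int g dvd y - x" if "x \<in> F" "y \<in> F" for x y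
    using that by (auto simp: F_def mod_eq_dvd_iff)
  then have "\<forall>x\<in>F. \<forall>y\<in>F. x < y \<longrightarrow> int g \<le> y - x"
    by (auto intro: zdvd_imp_le)
  from Min_add_spacing_le_Max[OF \<open>finite F\<close> \<open>F \<noteq> {}\<close> this]
  have spread: "int g * (int (card F) - 1) \<le> Max F - Min F"
    by simp
  obtain q where q: "Max F - Min F = int g * q"
    using dvd[OF \<open>Min F \<in> F\<close> \<open>Max F \<in> F\<close>] by auto
  with spread assms(3) have "int (card F) - 1 \<le> q"
    by simp
  moreover have "0 < card F"
    using \<open>finite F\<close> \<open>F \<noteq> {}\<close> by (simp add: card_gt_0_iff)
  ultimately have "0 \<le> q" "card F \<le> nat q + 1"
    by linarith+
  with card_A have "card A \<le> g * (nat q + 1)"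
    by (meson le_trans mult_le_mono2)
  moreover have "Max F = Min F + int (nat q) * int g"
    using q \<open>0 \<le> q\<close> by (simp add: algebra_simps)
  ultimately show ?thesis
    using ext by (intro exI[of _ "Min F"] exI[of _ "nat q"]) auto
qed

lemma pigeonhole_common_witness:
  assumes "finite I" "finite G" "G \<noteq> {}" "\<forall>i\<in>I. \<exists>g\<in>G. P i g"
  shows "\<exists>g\<in>G. \<exists>S\<subseteq>I. card I \<le> card S * card G \<and> (\<forall>i\<in>S. P i g)"
proof -
  obtain f where f: "\<forall>i\<in>I. f i \<in> G \<and> P i (f i)"
    using assms(4) by metis
  then have "f \<in> I \<rightarrow> G"
    by blast
  then obtain g where "g \<in> G" "card I \<le> card (f -` {g} \<inter> I) * card G"
    using pigeonhole_card assms(1-3) by metis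
  moreover have "\<forall>i\<in>f -` {g} \<inter> I. P i g"
    using f by auto
  ultimately show ?thesis
    by blast
qed

lemma Max_diff_Min_le_of_subset:
  fixes A :: "int set"
  assumes "A \<subseteq> {a..b}" "A \<noteq> {}"
  shows "Max A - Min A \<le> b - a"
proof -
  have "finite A"
    using assms(1) finite_atLeastAtMost_int finite_subset by blast
  then have "Max A \<in> A" "Min A \<in> A"
    using assms(2) by simp_all
  with assms(1) have "Max A \<le> b" "a \<le> Min A"
    by auto
  then show ?thesis
    by linarith
qed

lemma small_difference_in_dense_set:
  fixes A :: "int set" and \<delta> :: real and M D :: nat
  assumes "A \<subseteq> {-int M..int M}" "\<delta> * M \<le> card A" "2 \<le> \<delta> * M" "4 / \<delta> \<le> D"
  shows "\<exists>g\<in>{1..D}. \<exists>x. x \<in> A \<and> x + int g \<in> A"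
proof -
  have "finite A"
    using assms(1) finite_atLeastAtMost_int finite_subset by blast
  moreover have "2 \<le> card A"
    using assms(2,3) by linarith
  ultimately obtain x g where xg: "x \<in> A" "x + int g \<in> A" "1 \<le> g"
      and "int g * (int (card A) - 1) \<le> Max A - Min A"
    using exists_small_difference by blast
  moreover have "Max A - Min A \<le> 2 * int M"
    using Max_diff_Min_le_of_subset[OF assms(1)] xg(1) by fastforce
  ultimately have "of_int (int g * (int (card A) - 1)) \<le> (of_int (2 * int M) :: real)"
    by (simp only: of_int_le_iff)
  then have "real g * (real (card A) - 1) \<le> 2 * M"
    by simp
  moreover have "real g * (\<delta> * M / 2) \<le> real g * (real (card A) - 1)"
    using assms(2,3) by (intro mult_left_mono) auto
  ultimately have "real g * (\<delta> * M / 2) \<le> 2 * M"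
    by linarith
  then have "(real g * \<delta>) * M \<le> 4 * M"
    by (simp add: field_simps)
  moreover have "0 < \<delta>"
    using assms(3) mult_nonpos_nonneg[of \<delta> "real M"] by linarith
  moreover have "0 < real M"
    using assms(3) by (cases "M = 0") auto
  ultimately have "real g \<le> 4 / \<delta>"
    by (simp add: pos_le_divide_eq)
  with assms(4) xg show ?thesis
    by fastforce
qed

lemma long_difference_in_dense_set:
  fixes A :: "int set" and \<delta> :: real and M D g :: nat
  assumes "A \<subseteq> {-int M..int M}" "\<delta> * M \<le> card A" "A \<noteq> {}" "1 \<le> g" "g \<le> D"
  shows "\<exists>v T. v \<in> A \<and> v + int T * int g \<in> A \<and> \<delta> * M / D - 1 \<le> T \<and> T \<le> 2 * M"
proof -
  have "finite A"
    using assms(1) finite_atLeastAtMost_int finite_subset by blast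
  then obtain v T where vT: "v \<in> A" "v + int T * int g \<in> A" "card A \<le> g * (T + 1)"
      and "int T * int g \<le> Max A - Min A"
    using exists_long_difference_mod assms(3,4) by blast
  moreover have "Max A - Min A \<le> 2 * int M"
    using Max_diff_Min_le_of_subset[OF assms(1,3)] by simp
  moreover have "int T * 1 \<le> int T * int g"
    using assms(4) by (intro mult_left_mono) auto
  ultimately have "T \<le> 2 * M"
    by linarith
  have "card A \<le> D * (T + 1)"
    using vT(3) assms(5) by (meson le_trans mult_le_mono1)
  then have "\<delta> * M \<le> real D * (T + 1)"
    using assms(2) by (metis of_nat_le_iff of_nat_mult order_trans)
  then have "\<delta> * M / D - 1 \<le> T"
    using assms(4,5) by (simp add: field_simps)
  with vT \<open>T \<le> 2 * M\<close> show ?thesis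
    by blast
qed

text \<open>While the progression is shorter than \<open>N\<close>, a step may only lengthen it by one, which the
  invariant \<open>\<tau> (s - N) \<le> L\<close> tolerates because its left-hand side is then nonpositive.\<close>
lemma arith_prog_length_invariant_step:
  fixes \<tau> :: real and s L L' T N :: nat
  assumes "0 \<le> \<tau>" "\<tau> \<le> T" "T \<le> N" "s \<le> L" "\<tau> * (real s - N) \<le> L"
    and "L + 1 \<le> L'" "T \<le> L + 1 \<Longrightarrow> L + T \<le> L'"
  shows "\<tau> * (real (s + 1) - N) \<le> L'"
proof (cases "T \<le> L + 1")
  case True
  have "\<tau> * (real (s + 1) - N) = \<tau> * (real s - N) + \<tau>"
    by (simp add: algebra_simps)
  moreover have "real L + T \<le> L'"
    using assms(7) True by (simp flip: of_nat_add)
  ultimately show ?thesis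
    using assms(2,5) by linarith
next
  case False
  then have "real (s + 1) - N \<le> 0"
    using assms(3,4) by simp
  with assms(1) have "\<tau> * (real (s + 1) - N) \<le> 0"
    by (simp add: mult_nonneg_nonpos)
  then show ?thesis
    by simp
qed

lemma sumset_contains_long_arith_prog:
  fixes \<tau> :: real and g N K :: nat and S :: "nat set"
  assumes nonempty: "\<forall>k\<in>{1..K}. A k \<noteq> {}" and "S \<subseteq> {1..K}"
    and unit: "\<forall>k\<in>S. \<exists>u. u \<in> A k \<and> u + int g \<in> A k"
    and long: "\<forall>k\<in>S. \<exists>v T. v \<in> A k \<and> v + int T * int g \<in> A k \<and> \<tau> \<le> T \<and> T \<le> N"
    and "0 \<le> \<tau>"
  shows "\<exists>a L. arith_prog a g L \<subseteq> sumset A K \<and> card S \<le> L \<and> \<tau> * (real (card S) - N) \<le> L"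
proof -
  have grow: "\<exists>a L. arith_prog a g L \<subseteq> sumset A k \<and> card (S \<inter> {1..k}) \<le> L \<and>
      \<tau> * (real (card (S \<inter> {1..k})) - N) \<le> L" if "k \<le> K" for k
    using that
  proof (induction k)
    case 0
    have "arith_prog 0 g 0 \<subseteq> sumset A 0"
      by (simp add: arith_prog_def sumset_0)
    moreover have "\<tau> * (0 - real N) \<le> 0"
      using \<open>0 \<le> \<tau>\<close> by (simp add: mult_nonneg_nonpos)
    ultimately show ?case
      by fastforce
  next
    case (Suc k)
    then obtain a L where prog: "arith_prog a g L \<subseteq> sumset A k"
      and inv: "card (S \<inter> {1..k}) \<le> L" "\<tau> * (real (card (S \<inter> {1..k})) - N) \<le> L"
      by auto
    show ?case
    proof (cases "Suc k \<in> S")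
      case True
      then have card_Suc: "card (S \<inter> {1..Suc k}) = card (S \<inter> {1..k}) + 1"
        by (simp add: atLeastAtMostSuc_conv Int_insert_right)
      obtain u v T where u: "u \<in> A (Suc k)" "u + int g \<in> A (Suc k)"
        and v: "v \<in> A (Suc k)" "v + int T * int g \<in> A (Suc k)" and T: "\<tau> \<le> T" "T \<le> N"
        using unit long True by blast
      obtain a' L' where prog': "arith_prog a' g L' \<subseteq> sumset A (Suc k)"
        and "L + 1 \<le> L'" "T \<le> L + 1 \<Longrightarrow> L + T \<le> L'"
        using arith_prog_sumset_Suc_extend[OF prog u v] by blast
      with arith_prog_length_invariant_step[OF \<open>0 \<le> \<tau>\<close> T inv] inv(1)
      have "card (S \<inter> {1..Suc k}) \<le> L'" "\<tau> * (real (card (S \<inter> {1..Suc k})) - N) \<le> L'"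
        unfolding card_Suc by simp_all
      with prog' show ?thesis
        by blast
    next
      case False
      then have S_Suc: "S \<inter> {1..Suc k} = S \<inter> {1..k}"
        by (auto simp: le_Suc_eq)
      obtain w where "w \<in> A (Suc k)"
        using nonempty Suc.prems by fastforce
      with arith_prog_sumset_Suc[OF prog, of w 0] inv show ?thesis
        unfolding S_Suc by (intro exI[of _ "a + w"] exI[of _ L]) simp
    qed
  qed
  have "S \<inter> {1..K} = S"
    using \<open>S \<subseteq> {1..K}\<close> by blast
  with grow[OF order_refl] show ?thesis
    by simp
qed

lemma arith_prog_length_bound:
  fixes \<delta> B \<tau> :: real and D M s L :: nat
  assumes "0 < \<delta>" "0 < B" "0 < D" "(2 * D + 2 * D\<^sup>2 * B / \<delta>) * M \<le> real s * D" "s \<le> L"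
    and "\<delta> * M / D - 1 \<le> \<tau>" "\<tau> * (real s - 2 * M) \<le> L"
  shows "B * (real M)\<^sup>2 \<le> L"
proof -
  have "(2 * D + 2 * D\<^sup>2 * B / \<delta>) * M = (2 * M + 2 * D * B * M / \<delta>) * D"
    by (simp add: field_simps power2_eq_square)
  with assms(3,4) have s_bound: "2 * M + 2 * D * B * M / \<delta> \<le> s"
    by (simp add: mult_le_cancel_right_pos)
  show ?thesis
  proof (cases "\<delta> * M < 2 * D")
    case True
    then have "real M \<le> 2 * D / \<delta>"
      using assms(1) by (simp add: pos_le_divide_eq mult.commute)
    then have "B * M * M \<le> B * M * (2 * D / \<delta>)"
      using assms(2) by (intro mult_left_mono) auto
    also have "\<dots> = 2 * D * B * M / \<delta>"
      by simp
    also have "\<dots> \<le> s"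
      using s_bound by linarith
    finally show ?thesis
      using assms(5) by (simp add: power2_eq_square)
  next
    case False
    then have "\<delta> * M / (2 * D) \<le> \<tau>"
      using assms(3,6) by (simp add: field_simps)
    moreover have "0 \<le> \<delta> * M / (2 * D)"
      using assms(1) by simp
    ultimately have "0 \<le> \<tau>"
      by linarith
    moreover have "2 * D * B * M / \<delta> \<le> real s - 2 * M"
      using s_bound by simp
    ultimately have "(\<delta> * M / (2 * D)) * (2 * D * B * M / \<delta>) \<le> \<tau> * (real s - 2 * M)"
      using assms(1,2) \<open>\<delta> * M / (2 * D) \<le> \<tau>\<close> by (intro mult_mono) auto
    moreover have "(\<delta> * M / (2 * D)) * (2 * D * B * M / \<delta>) = B * (real M)\<^sup>2"
      using assms(1,3) by (simp add: field_simps power2_eq_square)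
    ultimately show ?thesis
      using assms(7) by simp
  qed
qed

lemma dense_sumset_contains_arith_prog:
  fixes \<delta> B :: real and D M K :: nat and A :: "nat \<Rightarrow> int set"
  assumes "0 < B" "4 / \<delta> \<le> D" "2 \<le> \<delta> * M" "(2 * D + 2 * D\<^sup>2 * B / \<delta>) * M \<le> K"
    and dense: "\<forall>i\<in>{1..K}. A i \<subseteq> {-int M..int M} \<and> \<delta> * M \<le> card (A i)"
  shows "\<exists>a d. 1 \<le> d \<and> d \<le> D \<and> {a + int i * int d | i. real i \<le> B * (real M)\<^sup>2} \<subseteq> sumset A K"
proof -
  have "0 < \<delta>"
    using assms(3) mult_nonpos_nonneg[of \<delta> "real M"] by linarith
  then have "0 < real D"
    using assms(2) divide_pos_pos[of 4 \<delta>] by linarith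
  then have "0 < D"
    by simp
  have nonempty: "\<forall>k\<in>{1..K}. A k \<noteq> {}"
    using dense assms(3) by fastforce
  have "\<forall>k\<in>{1..K}. \<exists>g\<in>{1..D}. \<exists>x. x \<in> A k \<and> x + int g \<in> A k"
    using small_difference_in_dense_set dense assms(2,3) by blast
  then obtain g S where g: "g \<in> {1..D}" and "S \<subseteq> {1..K}" "K \<le> card S * D"
    and unit: "\<forall>k\<in>S. \<exists>u. u \<in> A k \<and> u + int g \<in> A k"
    using pigeonhole_common_witness[of "{1..K}" "{1..D}" "\<lambda>k g. \<exists>x. x \<in> A k \<and> x + int g \<in> A k"]
      \<open>0 < D\<close> by auto
  define \<tau> where "\<tau> = max 0 (\<delta> * M / D - 1)"
  have "\<exists>v T. v \<in> A k \<and> v + int T * int g \<in> A k \<and> \<tau> \<le> T \<and> T \<le> 2 * M" if "k \<in> S" for k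
  proof -
    have "k \<in> {1..K}"
      using that \<open>S \<subseteq> {1..K}\<close> by blast
    then obtain v T where "v \<in> A k" "v + int T * int g \<in> A k" "\<delta> * M / D - 1 \<le> T" "T \<le> 2 * M"
      using long_difference_in_dense_set[of "A k" M \<delta> g D] dense nonempty g by auto
    then show ?thesis
      by (auto simp: \<tau>_def)
  qed
  with unit obtain a L where prog: "arith_prog a g L \<subseteq> sumset A K"
    and "card S \<le> L" "\<tau> * (real (card S) - 2 * M) \<le> L"
    using sumset_contains_long_arith_prog[OF nonempty \<open>S \<subseteq> {1..K}\<close>, of g \<tau> "2 * M"]
    by (auto simp: \<tau>_def)
  moreover have "(2 * D + 2 * D\<^sup>2 * B / \<delta>) * M \<le> real (card S) * D"
    using assms(4) \<open>K \<le> card S * D\<close> by (simp flip: of_nat_mult)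
  moreover have "\<delta> * M / D - 1 \<le> \<tau>"
    by (simp add: \<tau>_def)
  ultimately have "B * (real M)\<^sup>2 \<le> L"
    using arith_prog_length_bound[OF \<open>0 < \<delta>\<close> assms(1) \<open>0 < D\<close>] by blast
  then have "{a + int i * int g | i. real i \<le> B * (real M)\<^sup>2} \<subseteq> arith_prog a g L"
    by (auto simp: arith_prog_def)
  with prog g show ?thesis
    by (intro exI[of _ a] exI[of _ g]) auto
qed

theorem lemma2p12:
  fixes \<delta> B :: real
  assumes "\<delta> > 0" and "B > 0"
  shows "\<exists>(C::real) (d0::nat). C \<ge> 1 \<and> d0 \<ge> 1 \<and>
    (\<forall>(M::nat) (K::nat) (A::nat \<Rightarrow> int set).
       M > 0 \<longrightarrow> real K \<ge> C * real M \<longrightarrow>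
       (\<forall>i\<in>{1..K}. A i \<subseteq> {-int M..int M} \<and> real (card (A i)) \<ge> \<delta> * real M) \<longrightarrow>
       \<delta> * real M \<ge> 2 \<longrightarrow>
       (\<exists>(a::int) (d::nat). 1 \<le> d \<and> d \<le> d0 \<and>
          {a + int i * int d | i::nat. real i \<le> B * (real M)^2} \<subseteq> sumset A K))"
proof -
  define D where "D = nat \<lceil>4 / \<delta>\<rceil>"
  define C where "C = 2 * D + 2 * D\<^sup>2 * B / \<delta>"
  have D_bound: "4 / \<delta> \<le> D"
    unfolding D_def by linarith
  then have "1 \<le> D"
    using assms(1) divide_pos_pos[of 4 \<delta>] by linarith
  moreover have "1 \<le> C"
    using \<open>1 \<le> D\<close> assms by (simp add: C_def add_increasing2)
  ultimately show ?thesis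
  proof (intro exI[of _ C] exI[of _ D] conjI allI impI)
    fix M K :: nat and A :: "nat \<Rightarrow> int set"
    assume "C * M \<le> K" "\<forall>i\<in>{1..K}. A i \<subseteq> {-int M..int M} \<and> \<delta> * M \<le> card (A i)" "2 \<le> \<delta> * M"
    then show "\<exists>a d. 1 \<le> d \<and> d \<le> D \<and> {a + int i * int d | i. real i \<le> B * (real M)\<^sup>2} \<subseteq> sumset A K"
      using dense_sumset_contains_arith_prog[OF assms(2) D_bound] unfolding C_def by blast
  qed
qed

end
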